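(* The $\Sigma_1$-theory $\mathcal{T}_\varsigma$ is stably infinite with respect to $\{\sigma\}$.
   Context: $\varsigma:\mathbb{N}\to\mathbb{N}$ is the Busy Beaver function: $\varsigma(n)$ is the maximum number of $1$'s that a halting Turing machine with at most $n$ states can leave on its tape, starting from an all-$0$ tape (so $\varsigma(0)=0,\varsigma(1)=1,\varsigma(2)=4,\varsigma(3)=6,\varsigma(4)=13$). $\Sigma_1$ is the empty signature (only equality, interpreted as identity) with one sort $\sigma$. Let $\psi_{\ge n}=\exists x_1\dots x_n.\bigwedge_{1\le i<j\le n}\neg(x_i=x_j)$, $\psi_{\le n}=\exists x_1\dots x_n\forall y.\bigvee_{i=1}^n y=x_i$, $\psi_{=n}=\psi_{\ge n}\wedge\psi_{\le n}$. $\mathcal{T}_\varsigma$ is the $\Sigma_1$-theory (class of all $\Sigma_1$-interpretations satisfying the axioms) axiomatized by $\{\psi_{\ge\varsigma(k+2)}\vee\bigvee_{i=2}^{k+2}\psi_{=\varsigma(i)}:k\in\mathbb{N}\}$; its models are exactly those whose domain is infinite or has cardinality $\varsigma(k)$ for some $k\ge2$. A theory $\mathcal{T}$ is stably infinite w.r.t. $\{\sigma\}$ if every quantifier-free formula satisfied by some $\mathcal{T}$-interpretation is satisfied by some $\mathcal{T}$-interpretation with infinite domain. *)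

theory Defs
  imports Main
begin

text \<open>Turing machines with binary alphabet (False = 0, True = 1) on a bi-infinite tape.
  A machine with n states has working states 1..n; state 0 is the halting state
  (not counted).  The start state is 1; if n = 0 the machine is halted from the start.
  A transition table maps (state, read symbol) to (written symbol, move right?, next state);
  it is well-formed for n states if every next state of a working state lies in 0..n.\<close>

type_synonym tm = "nat \<Rightarrow> bool \<Rightarrow> bool \<times> bool \<times> nat"
type_synonym tm_config = "nat \<times> (int \<Rightarrow> bool) \<times> int"

definition tm_wf :: "nat \<Rightarrow> tm \<Rightarrow> bool" where
  "tm_wf n \<delta> \<longleftrightarrow> (\<forall>q\<in>{1..n}. \<forall>s. snd (snd (\<delta> q s)) \<le> n)"

definition tm_halted :: "nat \<Rightarrow> tm_config \<Rightarrow> bool" where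
  "tm_halted n c \<longleftrightarrow> fst c \<notin> {1..n}"

definition tm_step :: "nat \<Rightarrow> tm \<Rightarrow> tm_config \<Rightarrow> tm_config" where
  "tm_step n \<delta> c = (case c of (q, tape, h) \<Rightarrow>
     if q \<in> {1..n} then
       (case \<delta> q (tape h) of (w, mv, q') \<Rightarrow> (q', tape(h := w), if mv then h + 1 else h - 1))
     else c)"

definition tm_init :: tm_config where
  "tm_init = (1, (\<lambda>_. False), 0)"

definition tm_run :: "nat \<Rightarrow> tm \<Rightarrow> nat \<Rightarrow> tm_config" where
  "tm_run n \<delta> t = (tm_step n \<delta> ^^ t) tm_init"

definition ones :: "tm_config \<Rightarrow> nat" where
  "ones c = card {i. fst (snd c) i}"

text \<open>Number of 1s left on the tape by halting machines with n states
  (after halting the configuration no longer changes).\<close>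
definition busy_beaver :: "nat \<Rightarrow> nat" where
  "busy_beaver n = Max {ones (tm_run n \<delta> t) | \<delta> t. tm_wf n \<delta> \<and> tm_halted n (tm_run n \<delta> t)}"

datatype fm = Tru | Fls | Eq nat nat | Neg fm | Conj fm fm | Disj fm fm | Ex nat fm | All nat fm

type_synonym 'a interp = "'a set \<times> (nat \<Rightarrow> 'a)"

definition interp_wf :: "'a interp \<Rightarrow> bool" where
  "interp_wf I \<longleftrightarrow> fst I \<noteq> {} \<and> range (snd I) \<subseteq> fst I"

fun sat :: "'a interp \<Rightarrow> fm \<Rightarrow> bool" where
  "sat I Tru = True"
| "sat I Fls = False"
| "sat (D, v) (Eq x y) = (v x = v y)"
| "sat I (Neg \<phi>) = (\<not> sat I \<phi>)"
| "sat I (Conj \<phi> \<psi>) = (sat I \<phi> \<and> sat I \<psi>)"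
| "sat I (Disj \<phi> \<psi>) = (sat I \<phi> \<or> sat I \<psi>)"
| "sat (D, v) (Ex x \<phi>) = (\<exists>d\<in>D. sat (D, v(x := d)) \<phi>)"
| "sat (D, v) (All x \<phi>) = (\<forall>d\<in>D. sat (D, v(x := d)) \<phi>)"

fun qf :: "fm \<Rightarrow> bool" where
  "qf (Neg \<phi>) = qf \<phi>"
| "qf (Conj \<phi> \<psi>) = (qf \<phi> \<and> qf \<psi>)"
| "qf (Disj \<phi> \<psi>) = (qf \<phi> \<and> qf \<psi>)"
| "qf (Ex x \<phi>) = False"
| "qf (All x \<phi>) = False"
| "qf _ = True"

definition big_conj :: "fm list \<Rightarrow> fm" where
  "big_conj xs = foldr Conj xs Tru"

definition big_disj :: "fm list \<Rightarrow> fm" where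
  "big_disj xs = foldr Disj xs Fls"

definition exs :: "nat list \<Rightarrow> fm \<Rightarrow> fm" where
  "exs xs \<phi> = foldr Ex xs \<phi>"

text \<open>Variables x_1..x_n are 1..n; y is variable 0.\<close>
definition psi_ge :: "nat \<Rightarrow> fm" where
  "psi_ge n = exs [1..<n+1] (big_conj [Neg (Eq i j). i \<leftarrow> [1..<n+1], j \<leftarrow> [1..<n+1], i < j])"

definition psi_le :: "nat \<Rightarrow> fm" where
  "psi_le n = exs [1..<n+1] (All 0 (big_disj [Eq 0 i. i \<leftarrow> [1..<n+1]]))"

definition psi_eq :: "nat \<Rightarrow> fm" where
  "psi_eq n = Conj (psi_ge n) (psi_le n)"

definition T_axiom :: "nat \<Rightarrow> fm" where
  "T_axiom k = Disj (psi_ge (busy_beaver (k + 2)))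
                    (big_disj [psi_eq (busy_beaver i). i \<leftarrow> [2..<k+3]])"

text \<open>The theory T_varsigma: the class of all interpretations satisfying all axioms.\<close>
definition T_bb :: "'a interp \<Rightarrow> bool" where
  "T_bb I \<longleftrightarrow> interp_wf I \<and> (\<forall>k. sat I (T_axiom k))"

end

theory Submission
  imports Defs
begin

text \<open>Every axiom of the theory has a disjunct \<open>psi_ge n\<close>, which holds in any infinite
  interpretation, so the values of the Busy Beaver function never matter: every
  well-formed infinite interpretation is a model. A quantifier-free formula only depends on
  which of its variables are assigned equal values, so a satisfying assignment can be copied
  into any infinite domain by an injection.\<close>

lemma sat_big_conj [simp]: "sat I (big_conj xs) \<longleftrightarrow> (\<forall>\<phi>\<in>set xs. sat I \<phi>)"
  by (induction xs) (auto simp: big_conj_def)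

lemma sat_exsI:
  assumes "\<And>y. y \<notin> set xs \<Longrightarrow> u y = v y" and "u ` set xs \<subseteq> D" and "sat (D, u) \<phi>"
  shows "sat (D, v) (exs xs \<phi>)"
  using assms
proof (induction xs arbitrary: v)
  case Nil
  then have "u = v" by auto
  with Nil show ?case by (simp add: exs_def)
next
  case (Cons x xs)
  have "sat (D, v(x := u x)) (exs xs \<phi>)"
    by (rule Cons.IH) (use Cons.prems in auto)
  with Cons.prems show ?case by (auto simp: exs_def)
qed

lemma sat_psi_ge_infinite:
  assumes "infinite D"
  shows "sat (D, v) (psi_ge n)"
proof -
  obtain h :: "nat \<Rightarrow> _" where "inj h" and "range h \<subseteq> D"
    using assms infinite_countable_subset by blast
  let ?u = "\<lambda>i. if i \<in> set [1..<n+1] then h i else v i"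
  have "sat (D, ?u) (big_conj [Neg (Eq i j). i \<leftarrow> [1..<n+1], j \<leftarrow> [1..<n+1], i < j])"
    using \<open>inj h\<close> by (auto dest: injD)
  then show ?thesis
    unfolding psi_ge_def using \<open>range h \<subseteq> D\<close> by (intro sat_exsI[of _ ?u]) auto
qed

lemma T_bb_infinite:
  assumes "interp_wf I" and "infinite (fst I)"
  shows "T_bb I"
proof -
  obtain D v where I: "I = (D, v)" by (cases I)
  with assms(2) have "sat I (T_axiom k)" for k
    by (simp add: T_axiom_def sat_psi_ge_infinite)
  with assms(1) show ?thesis
    by (simp add: T_bb_def)
qed

lemma sat_qf_cong:
  assumes "qf \<phi>" and "\<And>x y. w x = w y \<longleftrightarrow> v x = v y"
  shows "sat (D, v) \<phi> \<longleftrightarrow> sat (E, w) \<phi>"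
  using assms by (induction \<phi>) auto

lemma ex_same_equalities_infinite:
  fixes v :: "nat \<Rightarrow> 'a"
  assumes "infinite (UNIV :: 'b set)"
  shows "\<exists>w :: nat \<Rightarrow> 'b. \<forall>x y. w x = w y \<longleftrightarrow> v x = v y"
proof -
  obtain h :: "nat \<Rightarrow> 'b" where "inj h"
    using assms infinite_countable_subset by blast
  define rep where "rep x = (LEAST y. v y = v x)" for x
  have "v (rep x) = v x" for x
    unfolding rep_def by (rule LeastI) auto
  then have "rep x = rep y \<longleftrightarrow> v x = v y" for x y
    unfolding rep_def by metis
  with \<open>inj h\<close> have "\<forall>x y. h (rep x) = h (rep y) \<longleftrightarrow> v x = v y"
    by (simp add: inj_eq)
  then show ?thesis by (rule exI[of _ "\<lambda>x. h (rep x)"])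
qed

theorem lemma49:
  fixes \<phi> :: fm and I :: "'a interp"
  assumes "qf \<phi>" and "T_bb I" and "sat I \<phi>"
    and "infinite (UNIV :: 'b set)"
  shows "\<exists>J :: 'b interp. T_bb J \<and> infinite (fst J) \<and> sat J \<phi>"
proof -
  obtain D v where I: "I = (D, v)" by (cases I)
  obtain w :: "nat \<Rightarrow> 'b" where w: "\<And>x y. w x = w y \<longleftrightarrow> v x = v y"
    using ex_same_equalities_infinite[OF assms(4)] by meson
  have "T_bb (UNIV, w)"
    using assms(4) by (intro T_bb_infinite) (auto simp: interp_wf_def)
  moreover have "sat (UNIV, w) \<phi>"
    using sat_qf_cong[where D = D and E = UNIV, OF assms(1) w] assms(3) I by simp
  ultimately show ?thesis
    using assms(4) by (intro exI[of _ "(UNIV, w)"]) simp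
qed

end
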